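(* Let $G=(V,E)$ be a DAG, $ij\in E$, and let $G_{ij}$ be the graph obtained from $G$ by deleting the edge $ij$ and all vertices of $\mathrm{de}(j)$. If $A$ is a set of vertices of $G_{ij}$ not containing $i,j$ such that $A$ d-separates $i$ and $j$ in $G_{ij}$, then $\lambda_{ij|A\cup\{i\}}(\phi_G(\Omega,\Lambda))=\lambda_{ij}$ for all parameters $(\Omega,\Lambda)$.
   Context: $G=(V,E)$ is a DAG, edges $i\to j$ written $ij$, $\mathrm{de}(j)$ the descendants of $j$ (excluding $j$). Parameters: $\Omega=\mathrm{diag}(\omega_i)$, $\omega_i>0$; $\Lambda=(\lambda_{ij})$ with $\lambda_{ij}=0$ for $ij\notin E$. $\phi_G(\Omega,\Lambda)=(I-\Lambda)^{-T}\Omega(I-\Lambda)^{-1}$. $\Sigma_B$ principal submatrix; $\Sigma_{ij|K}$ the submatrix with rows $(i,K)$, columns $(j,K)$; $\lambda_{ij|B}(\Sigma)=|\Sigma_{ij|B\setminus\{i\}}|/|\Sigma_B|$. d-separation: $K$ d-separates $i$ and $j$ if every path between them contains a non-collider in $K$ or a collider not in $K$ with no descendant in $K$; otherwise $K$ d-connects them. *)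

theory Defs
  imports "HOL-Analysis.Analysis"
begin

text \<open>Vertices of the DAG G are the elements of a finite linearly ordered type 'n;
  the edge set is E, with (a,b) \<in> E meaning a \<rightarrow> b.\<close>

definition desc :: "('n \<times> 'n) set \<Rightarrow> 'n \<Rightarrow> 'n set" where
  "desc E v = {w. (v, w) \<in> E\<^sup>+}"

definition adj :: "('n \<times> 'n) set \<Rightarrow> 'n \<Rightarrow> 'n \<Rightarrow> bool" where
  "adj E a b \<longleftrightarrow> (a, b) \<in> E \<or> (b, a) \<in> E"

definition is_path :: "'n set \<Rightarrow> ('n \<times> 'n) set \<Rightarrow> 'n list \<Rightarrow> 'n \<Rightarrow> 'n \<Rightarrow> bool" where
  "is_path V E p i j \<longleftrightarrow> p \<noteq> [] \<and> hd p = i \<and> last p = j \<and> distinct p \<and> set p \<subseteq> V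
     \<and> (\<forall>k. k + 1 < length p \<longrightarrow> adj E (p ! k) (p ! (k + 1)))"

definition collider :: "('n \<times> 'n) set \<Rightarrow> 'n list \<Rightarrow> nat \<Rightarrow> bool" where
  "collider E p k \<longleftrightarrow> (p ! (k - 1), p ! k) \<in> E \<and> (p ! (k + 1), p ! k) \<in> E"

definition d_separates :: "'n set \<Rightarrow> ('n \<times> 'n) set \<Rightarrow> 'n set \<Rightarrow> 'n \<Rightarrow> 'n \<Rightarrow> bool" where
  "d_separates V E K i j \<longleftrightarrow>
     (\<forall>p. is_path V E p i j \<longrightarrow>
        (\<exists>k. 0 < k \<and> k + 1 < length p \<and>
           ((\<not> collider E p k \<and> p ! k \<in> K) \<or>
            (collider E p k \<and> p ! k \<notin> K \<and> desc E (p ! k) \<inter> K = {}))))"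

definition Gij_vertices :: "('n \<times> 'n) set \<Rightarrow> 'n \<Rightarrow> 'n set" where
  "Gij_vertices E j = UNIV - desc E j"

definition Gij_edges :: "('n \<times> 'n) set \<Rightarrow> 'n \<Rightarrow> 'n \<Rightarrow> ('n \<times> 'n) set" where
  "Gij_edges E i j = {(a, b). (a, b) \<in> E \<and> (a, b) \<noteq> (i, j)
      \<and> a \<in> Gij_vertices E j \<and> b \<in> Gij_vertices E j}"

definition diag_mat :: "('n::finite \<Rightarrow> real) \<Rightarrow> real^'n^'n" where
  "diag_mat \<omega> = (\<chi> a b. if a = b then \<omega> a else 0)"

definition phi :: "('n::finite \<Rightarrow> real) \<Rightarrow> real^'n^'n \<Rightarrow> real^'n^'n" where
  "phi \<omega> \<Lambda> = transpose (matrix_inv (mat 1 - \<Lambda>)) ** diag_mat \<omega> ** matrix_inv (mat 1 - \<Lambda>)"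

definition det_sub :: "real^'n^'n \<Rightarrow> ('n::finite) list \<Rightarrow> 'n list \<Rightarrow> real" where
  "det_sub M rs cs = (\<Sum>p | p permutes {..<length rs}.
      of_int (sign p) * (\<Prod>q<length rs. M $ (rs ! q) $ (cs ! (p q))))"

definition lambda_cond :: "((real, 'n::{finite,linorder}) vec, 'n) vec \<Rightarrow> 'n \<Rightarrow> 'n \<Rightarrow> 'n set \<Rightarrow> real" where
  "lambda_cond S i j B =
     det_sub S (i # sorted_list_of_set (B - {i})) (j # sorted_list_of_set (B - {i}))
     / det_sub S (sorted_list_of_set B) (sorted_list_of_set B)"

end

theory Submission
  imports Defs "Jordan_Normal_Form.Determinant"
begin

text \<open>
  Write \<open>\<Sigma> = \<phi>\<^sub>G(\<Omega>, \<Lambda>)\<close>, \<open>L = I - \<Lambda>\<close> and \<open>N = L\<inverse>\<close>, so that \<open>\<Sigma> = N\<^sup>T \<Omega> N\<close>, and let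
  \<open>B = A \<union> {i}\<close>. Let \<open>W\<close> be the ancestral closure of \<open>B \<union> pa(j)\<close> and \<open>C\<close> the connected
  component of \<open>i\<close> in the moral graph of \<open>G[W]\<close> with \<open>A\<close> removed. With \<open>D\<close> the restriction of
  \<open>\<Omega>\<inverse>\<close> to \<open>W\<close>, the \<open>|C| - 1\<close> linear conditions \<open>(L D L\<^sup>T \<alpha>)\<^sub>v = 0\<close>, \<open>v \<in> C - {i}\<close>, have a
  nonzero solution \<open>\<alpha>\<close> supported on \<open>C\<close>. Then \<open>y = L D L\<^sup>T \<alpha>\<close> is supported on \<open>B\<close>, and
  \<open>y\<^sup>T \<Sigma>\<close> agrees with \<open>\<alpha>\<close> on \<open>W\<close>, so it vanishes on \<open>A\<close>. Since a moral path from \<open>i\<close> to another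
  parent of \<open>j\<close> would yield a walk d-connecting \<open>i\<close> and \<open>j\<close> in \<open>G\<^sub>i\<^sub>j\<close>, moreover
  \<open>(y\<^sup>T \<Sigma>)\<^sub>j = \<lambda>\<^sub>i\<^sub>j \<alpha>\<^sub>i = \<lambda>\<^sub>i\<^sub>j (y\<^sup>T \<Sigma>)\<^sub>i\<close>. Thus \<open>y\<close> is a nonzero left kernel vector of the
  matrix with rows \<open>(i, A)\<close> and columns \<open>(j - \<lambda>\<^sub>i\<^sub>j i, A)\<close>: the numerator of \<open>\<lambda>\<^sub>i\<^sub>j\<^sub>|\<^sub>B\<close> is
  \<open>\<lambda>\<^sub>i\<^sub>j\<close> times the principal minor \<open>|\<Sigma>\<^sub>B|\<close>, which is nonzero as \<open>\<Sigma>\<close> is positive definite.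
\<close>

no_notation Matrix.vec_index (infixl \<open>$\<close> 100)
hide_type (open) Matrix.vec
hide_const (open) Matrix.mat

section \<open>Triples along lists\<close>

fun successively3 :: "('a \<Rightarrow> 'a \<Rightarrow> 'a \<Rightarrow> bool) \<Rightarrow> 'a list \<Rightarrow> bool" where
  "successively3 P (a # b # c # xs) \<longleftrightarrow> P a b c \<and> successively3 P (b # c # xs)"
| "successively3 P _ \<longleftrightarrow> True"

lemma successively3_Cons_Cons:
  "successively3 P (a # b # xs) \<longleftrightarrow> (xs = [] \<or> P a b (hd xs)) \<and> successively3 P (b # xs)"
  by (cases xs) auto

lemma successively3_conv_nth:
  "successively3 P xs \<longleftrightarrow>
     (\<forall>k. Suc (Suc k) < length xs \<longrightarrow> P (xs ! k) (xs ! Suc k) (xs ! Suc (Suc k)))"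
  by (induction P xs rule: successively3.induct) (force simp: nth_Cons split: nat.splits)+

lemma successively3_mono:
  assumes "successively3 P xs"
    and "\<And>a b c. a \<in> set xs \<Longrightarrow> b \<in> set xs \<Longrightarrow> c \<in> set xs \<Longrightarrow> P a b c \<Longrightarrow> Q a b c"
  shows "successively3 Q xs"
  using assms by (induction P xs rule: successively3.induct) auto

lemma successively3_append_iff:
  "successively3 P (xs @ c # ys) \<longleftrightarrow>
     successively3 P (xs @ [c]) \<and> successively3 P (c # ys) \<and>
     (xs = [] \<or> ys = [] \<or> P (last xs) c (hd ys))"
  by (induction xs rule: induct_list012) (auto simp: successively3_Cons_Cons)

lemma successively3_rev [simp]:
  "successively3 P (rev xs) \<longleftrightarrow> successively3 (\<lambda>a b c. P c b a) xs"
proof (induction xs)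
  case (Cons x xs)
  show ?case
  proof (cases xs)
    case (Cons y zs)
    have "successively3 P (rev zs @ y # [x]) \<longleftrightarrow>
        successively3 P (rev zs @ [y]) \<and> (zs = [] \<or> P (hd zs) y x)"
      by (subst successively3_append_iff) (auto simp: last_rev)
    then show ?thesis
      using Cons.IH by (simp add: Cons successively3_Cons_Cons conj_commute)
  qed simp
qed simp

lemma successively3_first_violation:
  assumes "\<not> successively3 P xs"
  obtains ys c zs where "xs = ys @ c # zs" "ys \<noteq> []" "zs \<noteq> []"
    "successively3 P (ys @ [c])" "\<not> P (last ys) c (hd zs)"
  using assms
proof (induction P xs arbitrary: thesis rule: successively3.induct)
  case (1 P a b c xs)
  show ?case
  proof (cases "P a b c")
    case True
    then obtain ys d zs where "b # c # xs = ys @ d # zs" "ys \<noteq> []" "zs \<noteq> []"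
      "successively3 P (ys @ [d])" "\<not> P (last ys) d (hd zs)"
      using "1.IH" "1.prems"(2) by auto
    with True show ?thesis
      by (intro "1.prems"(1)[of "a # ys" d zs])
        (auto simp: neq_Nil_conv successively3_Cons_Cons hd_append)
  qed (intro "1.prems"(1)[of "[a]" b "c # xs"]; simp)
qed simp_all

section \<open>Walks and d-separation\<close>

definition ancestors :: "('a \<times> 'a) set \<Rightarrow> 'a set \<Rightarrow> 'a set" where
  "ancestors F Y = {x. \<exists>y\<in>Y. (x, y) \<in> F\<^sup>*}"

definition head_to_head :: "('a \<times> 'a) set \<Rightarrow> 'a \<Rightarrow> 'a \<Rightarrow> 'a \<Rightarrow> bool" where
  "head_to_head F a b c \<longleftrightarrow> (a, b) \<in> F \<and> (c, b) \<in> F"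

text \<open>With \<open>Y = Z\<close> this is d-connection given \<open>Z\<close>. Walks obtained from moral paths only satisfy
  it for \<open>Y = Z \<union> {x, y}\<close>, with \<open>x\<close>, \<open>y\<close> the end points, and are then shortened to
  d-connecting ones.\<close>
definition open_triple :: "('a \<times> 'a) set \<Rightarrow> 'a set \<Rightarrow> 'a set \<Rightarrow> 'a \<Rightarrow> 'a \<Rightarrow> 'a \<Rightarrow> bool" where
  "open_triple F Z Y a b c \<longleftrightarrow> (if head_to_head F a b c then b \<in> ancestors F Y else b \<notin> Z)"

abbreviation walk :: "('a \<times> 'a) set \<Rightarrow> 'a list \<Rightarrow> bool" where
  "walk F \<equiv> successively (adj F)"

abbreviation directed_walk :: "('a \<times> 'a) set \<Rightarrow> 'a list \<Rightarrow> bool" where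
  "directed_walk F \<equiv> successively (\<lambda>a b. (a, b) \<in> F)"

lemma ancestors_iff_desc: "x \<in> ancestors F Z \<longleftrightarrow> x \<in> Z \<or> desc F x \<inter> Z \<noteq> {}"
  unfolding ancestors_def desc_def by (auto simp: rtrancl_eq_or_trancl)

lemma ancestors_mono: "Y \<subseteq> Y' \<Longrightarrow> ancestors F Y \<subseteq> ancestors F Y'"
  unfolding ancestors_def by auto

lemma subset_ancestors: "Y \<subseteq> ancestors F Y"
  unfolding ancestors_def by auto

lemma ancestors_rtrancl: "(x, y) \<in> F\<^sup>* \<Longrightarrow> y \<in> ancestors F Y \<Longrightarrow> x \<in> ancestors F Y"
  unfolding ancestors_def using rtrancl_trans by fastforce

lemma ancestors_insert: "ancestors F (insert y Y) = {x. (x, y) \<in> F\<^sup>*} \<union> ancestors F Y"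
  unfolding ancestors_def by auto

lemma ancestors_UNIV: "ancestors F UNIV = UNIV"
  unfolding ancestors_def by auto

lemma walk_rev: "walk F (rev p) \<longleftrightarrow> walk F p"
  by (simp add: adj_def disj_commute)

lemma open_triple_sym: "open_triple F Z Y c b a \<longleftrightarrow> open_triple F Z Y a b c"
  unfolding open_triple_def head_to_head_def by auto

lemma open_triple_flip [simp]: "(\<lambda>a b c. open_triple F Z Y c b a) = open_triple F Z Y"
  by (intro ext) (rule open_triple_sym)

lemma open_triple_UNIV: "open_triple F Z UNIV a b c \<longleftrightarrow> head_to_head F a b c \<or> b \<notin> Z"
  by (simp add: open_triple_def ancestors_UNIV)

lemma acyclic_not_head_to_head:
  "acyclic F \<Longrightarrow> (b, c) \<in> F \<Longrightarrow> \<not> head_to_head F a b c"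
  unfolding head_to_head_def acyclic_def by (meson r_into_trancl trancl_into_trancl)

lemma walk_set_subset:
  assumes "walk F p" "F \<subseteq> V \<times> V" "hd p \<in> V"
  shows "set p \<subseteq> V"
  using assms by (induction p rule: induct_list012) (auto simp: adj_def)

lemma directed_walk_imp_walk: "directed_walk F p \<Longrightarrow> walk F p"
  by (erule successively_mono) (simp add: adj_def)

lemma trancl_imp_directed_walk:
  "(c, t) \<in> F\<^sup>+ \<Longrightarrow> \<exists>q. directed_walk F (c # q) \<and> q \<noteq> [] \<and> last q = t"
proof (induction rule: converse_trancl_induct)
  case (base c)
  then show ?case by (intro exI[of _ "[t]"]) simp
next
  case (step c d)
  then obtain q where "directed_walk F (d # q)" "q \<noteq> []" "last q = t" by blast
  with step.hyps(1) show ?case by (intro exI[of _ "d # q"]) simp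
qed

lemma directed_walk_trancl: "directed_walk F (c # q) \<Longrightarrow> x \<in> set q \<Longrightarrow> (c, x) \<in> F\<^sup>+"
  by (induction q arbitrary: c) (auto intro: trancl_into_trancl2)

lemma directed_walk_open:
  assumes acyc: "acyclic F" and dw: "directed_walk F (c # q)" and c: "c \<notin> ancestors F Z"
  shows "successively3 (open_triple F Z Y) (c # q)"
proof -
  have "b \<notin> Z" if "b \<in> set q" for b
    using c subset_ancestors[of Z F]
      ancestors_rtrancl[OF trancl_into_rtrancl[OF directed_walk_trancl[OF dw that]], of Z]
    by auto
  with dw show ?thesis
  proof (induction q arbitrary: c)
    case (Cons b q)
    have "open_triple F Z Y c b (hd q)" if "q \<noteq> []"
      using Cons.prems that acyclic_not_head_to_head[OF acyc, of b "hd q"]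
      by (cases q) (auto simp: open_triple_def)
    with Cons show ?case by (auto simp: successively3_Cons_Cons)
  qed simp
qed

text \<open>Until its first collider an open walk leaving \<open>x\<close> along \<open>x \<rightarrow> y\<close> is directed, and that
  collider is an ancestor of \<open>Y\<close>.\<close>
lemma open_walk_forward:
  assumes "walk F (x # y # r)" "successively3 (open_triple F Z Y) (x # y # r)" "(x, y) \<in> F"
  shows "(x, last (y # r)) \<in> F\<^sup>+ \<or> x \<in> ancestors F Y"
  using assms
proof (induction r arbitrary: x y)
  case (Cons z r)
  show ?case
  proof (cases "(y, z) \<in> F")
    case True
    then have "(y, last (z # r)) \<in> F\<^sup>+ \<or> y \<in> ancestors F Y"
      using Cons.IH[of y z] Cons.prems by simp
    then show ?thesis
      using Cons.prems(3) ancestors_rtrancl[of x y F Y] by (auto intro: trancl_into_trancl2)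
  next
    case False
    then have "head_to_head F x y z"
      using Cons.prems(1,3) by (simp add: adj_def head_to_head_def)
    then have "y \<in> ancestors F Y"
      using Cons.prems(2) by (simp add: open_triple_def)
    then show ?thesis
      using ancestors_rtrancl[of x y F Y] Cons.prems(3) by auto
  qed
qed auto

lemma open_triple_across_loop:
  assumes acyc: "acyclic F"
    and loop: "walk F (v # ys @ [v])" "successively3 (open_triple F Z Y) (v # ys @ [v])"
    and enter: "open_triple F Z Y a v (hd (ys @ [v]))"
    and leave: "open_triple F Z Y (last (v # ys)) v c"
  shows "open_triple F Z Y a v c"
proof (cases "head_to_head F a v c")
  case False
  with enter leave show ?thesis
    by (auto simp: open_triple_def head_to_head_def split: if_splits)
next
  case True
  let ?b = "hd (ys @ [v])"
  show ?thesis
  proof (rule ccontr)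
    assume "\<not> ?thesis"
    with True have not_anc: "v \<notin> ancestors F Y" by (simp add: open_triple_def)
    with enter True have "(?b, v) \<notin> F"
      by (auto simp: open_triple_def head_to_head_def split: if_splits)
    moreover have "adj F v ?b" using loop(1) by (cases ys) auto
    ultimately have "(v, ?b) \<in> F" by (auto simp: adj_def)
    then have "(v, v) \<in> F\<^sup>+ \<or> v \<in> ancestors F Y"
      using open_walk_forward[of F v ?b "tl (ys @ [v])" Z Y] loop by (cases ys) auto
    with not_anc acyc show False by (simp add: acyclic_def)
  qed
qed

lemma open_walk_remove_loop:
  assumes acyc: "acyclic F"
    and w: "walk F (xs @ v # ys @ v # zs)"
    and t: "successively3 (open_triple F Z Y) (xs @ v # ys @ v # zs)"
  shows "walk F (xs @ v # zs) \<and> successively3 (open_triple F Z Y) (xs @ v # zs)"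
proof -
  let ?open = "open_triple F Z Y"
  have "walk F (xs @ [v])" "walk F ((v # ys) @ (v # zs))"
    using w by (auto simp: successively_append_iff)
  then have w_loop: "walk F (v # ys @ [v])" and w_ends: "walk F (xs @ [v])" "walk F (v # zs)"
    using successively_append_iff[of _ "v # ys"] by auto
  have t_loop: "successively3 ?open (v # ys @ [v])"
    and t_ends: "successively3 ?open (xs @ [v])" "successively3 ?open (v # zs)"
    using t successively3_append_iff[of ?open xs v "ys @ v # zs"]
      successively3_append_iff[of ?open "v # ys" v zs] by auto
  have "?open (last xs) v (hd zs)" if "xs \<noteq> []" "zs \<noteq> []"
  proof (rule open_triple_across_loop[OF acyc w_loop t_loop])
    show "?open (last xs) v (hd (ys @ [v]))"
      using t that successively3_append_iff[of ?open xs v "ys @ v # zs"] by (cases ys) auto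
    show "?open (last (v # ys)) v (hd zs)"
      using t that successively3_append_iff[of ?open "xs @ v # ys" v zs] by auto
  qed
  with w_ends t_ends show ?thesis
    by (auto simp: successively_append_iff successively3_append_iff[of _ xs v zs])
qed

lemma open_walk_imp_open_path:
  assumes acyc: "acyclic F"
    and "walk F p" "successively3 (open_triple F Z Y) p" "p \<noteq> []"
  shows "\<exists>q. distinct q \<and> q \<noteq> [] \<and> hd q = hd p \<and> last q = last p \<and>
    walk F q \<and> successively3 (open_triple F Z Y) q"
  using assms(2-)
proof (induction "length p" arbitrary: p rule: less_induct)
  case less
  show ?case
  proof (cases "distinct p")
    case False
    then obtain xs v ys zs where p: "p = xs @ [v] @ ys @ [v] @ zs"
      using not_distinct_decomp by blast
    let ?p' = "xs @ v # zs"
    have "walk F ?p' \<and> successively3 (open_triple F Z Y) ?p'"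
      using open_walk_remove_loop[OF acyc, of xs v ys zs] less.prems p by simp
    moreover have "length ?p' < length p" using p by simp
    moreover have "hd ?p' = hd p" "last ?p' = last p"
      using p by (cases xs; cases zs; auto)+
    ultimately show ?thesis using less.hyps[of ?p'] by fastforce
  qed (use less.prems in blast)
qed

text \<open>The first collider that is an ancestor of \<open>y\<close> but not of \<open>Y\<close> is bypassed by a directed
  path from it to \<open>y\<close>.\<close>
lemma open_walk_shortcut:
  assumes acyc: "acyclic F" and ZY: "Z \<subseteq> Y"
    and p: "walk F p" "p \<noteq> []" "last p = y"
    and t: "successively3 (open_triple F Z (insert y Y)) p"
  shows "\<exists>q. walk F q \<and> q \<noteq> [] \<and> hd q = hd p \<and> last q = y \<and>
    successively3 (open_triple F Z Y) q"
proof (cases "successively3 (open_triple F Z Y) p")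
  case False
  then obtain xs c zs where split: "p = xs @ c # zs" "xs \<noteq> []" "zs \<noteq> []"
    and t_xs: "successively3 (open_triple F Z Y) (xs @ [c])"
    and closed: "\<not> open_triple F Z Y (last xs) c (hd zs)"
    by (rule successively3_first_violation)
  have "open_triple F Z (insert y Y) (last xs) c (hd zs)"
    using t split successively3_append_iff[of _ xs c zs] by simp
  with closed have c: "c \<notin> ancestors F Y" and "(c, y) \<in> F\<^sup>*"
    by (auto simp: open_triple_def ancestors_insert split: if_splits)
  then consider "c = y" | "(c, y) \<in> F\<^sup>+" using rtranclD by metis
  then show ?thesis
  proof cases
    case 1
    moreover have "walk F (xs @ [c])" using p(1) split(1) by (simp add: successively_append_iff)
    ultimately show ?thesis using t_xs split by (intro exI[of _ "xs @ [c]"]) auto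
  next
    case 2
    obtain r where r: "directed_walk F (c # r)" "r \<noteq> []" "last r = y"
      using trancl_imp_directed_walk[OF 2] by blast
    have c_anc: "c \<notin> ancestors F Z" and "c \<notin> Z"
      using c ancestors_mono[OF ZY] subset_ancestors[of Y F] ZY by auto
    have "walk F (xs @ c # r)"
      using p(1) split(1) directed_walk_imp_walk[OF r(1)] by (simp add: successively_append_iff)
    moreover have "(c, hd r) \<in> F" using r(1,2) by (cases r) auto
    then have "open_triple F Z Y (last xs) c (hd r)"
      using \<open>c \<notin> Z\<close> acyclic_not_head_to_head[OF acyc] by (simp add: open_triple_def)
    then have "successively3 (open_triple F Z Y) (xs @ c # r)"
      using t_xs directed_walk_open[OF acyc r(1) c_anc]
      by (intro successively3_append_iff[THEN iffD2]) simp
    ultimately show ?thesis using split r by (intro exI[of _ "xs @ c # r"]) auto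
  qed
next
  case True
  with p show ?thesis by blast
qed

lemma open_walk_imp_d_connecting_walk:
  assumes acyc: "acyclic F"
    and p: "walk F p" "p \<noteq> []" "hd p = x" "last p = y"
    and t: "successively3 (open_triple F Z (insert x (insert y Z))) p"
  shows "\<exists>q. walk F q \<and> q \<noteq> [] \<and> hd q = x \<and> last q = y \<and> successively3 (open_triple F Z Z) q"
proof -
  have "walk F (rev p)" using p(1) by (rule walk_rev[THEN iffD2])
  moreover have "rev p \<noteq> []" "last (rev p) = x"
    and "successively3 (open_triple F Z (insert x (insert y Z))) (rev p)"
    using p t by (simp_all add: last_rev)
  ultimately obtain q where q: "walk F q" "q \<noteq> []" "hd q = y" "last q = x"
    and t_q: "successively3 (open_triple F Z (insert y Z)) q"
    using open_walk_shortcut[OF acyc, of Z "insert y Z" "rev p" x] p(4)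
    by (auto simp: hd_rev insert_commute)
  have "walk F (rev q)" using q(1) by (rule walk_rev[THEN iffD2])
  moreover have "rev q \<noteq> []" "last (rev q) = y"
    and "successively3 (open_triple F Z (insert y Z)) (rev q)"
    using q t_q by (simp_all add: last_rev)
  ultimately show ?thesis
    using open_walk_shortcut[OF acyc order_refl, of "rev q" y] q(4) by (simp add: hd_rev)
qed

lemma d_separates_imp_no_open_walk:
  assumes ds: "d_separates V F Z x y" and acyc: "acyclic F" and FV: "F \<subseteq> V \<times> V" and "x \<in> V"
    and p: "walk F p" "p \<noteq> []" "hd p = x" "last p = y"
    and t: "successively3 (open_triple F Z (insert x (insert y Z))) p"
  shows False
proof -
  obtain q where "walk F q" "q \<noteq> []" "hd q = x" "last q = y" "successively3 (open_triple F Z Z) q"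
    using open_walk_imp_d_connecting_walk[OF acyc p t] by blast
  then obtain q' where q': "distinct q'" "q' \<noteq> []" "hd q' = x" "last q' = y"
      "walk F q'" "successively3 (open_triple F Z Z) q'"
    using open_walk_imp_open_path[OF acyc] by metis
  have "set q' \<subseteq> V" using walk_set_subset[OF q'(5) FV] q'(3) \<open>x \<in> V\<close> by simp
  then have "is_path V F q' x y"
    using q' by (simp add: is_path_def successively_conv_nth)
  then obtain k where k: "0 < k" "k + 1 < length q'"
    "(\<not> collider F q' k \<and> q' ! k \<in> Z) \<or>
     (collider F q' k \<and> q' ! k \<notin> Z \<and> desc F (q' ! k) \<inter> Z = {})"
    using ds unfolding d_separates_def by blast
  then obtain k' where "k = Suc k'" by (cases k) auto
  then have "open_triple F Z Z (q' ! (k - 1)) (q' ! k) (q' ! (k + 1))"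
    using q'(6) k(2) by (simp add: successively3_conv_nth)
  with k(3) show False
    by (auto simp: open_triple_def head_to_head_def collider_def ancestors_iff_desc
        split: if_splits)
qed

section \<open>The graph \<open>G\<^sub>i\<^sub>j\<close> and the moral component of \<open>i\<close>\<close>

locale dag_edge =
  fixes E :: "('n \<times> 'n) set" and i j :: 'n and A :: "'n set"
  assumes dag: "acyclic E" and edge: "(i, j) \<in> E"
    and A_sub: "A \<subseteq> Gij_vertices E j" and i_notin: "i \<notin> A" and j_notin: "j \<notin> A"
begin

abbreviation Vij :: "'n set" where "Vij \<equiv> Gij_vertices E j"

abbreviation Eij :: "('n \<times> 'n) set" where "Eij \<equiv> Gij_edges E i j"

definition W :: "'n set" where
  "W = ancestors E (insert i A \<union> {u. (u, j) \<in> E})"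

lemma Vij_minus_j: "x \<in> Vij - {j} \<longleftrightarrow> (j, x) \<notin> E\<^sup>*"
  unfolding Gij_vertices_def desc_def by (auto simp: rtrancl_eq_or_trancl)

lemma acyclic_Eij: "acyclic Eij"
  by (rule acyclic_subset[OF dag]) (auto simp: Gij_edges_def)

lemma Eij_subset: "Eij \<subseteq> Vij \<times> Vij"
  unfolding Gij_edges_def by auto

lemma j_in_Vij: "j \<in> Vij"
  using dag by (auto simp: Gij_vertices_def desc_def acyclic_def)

lemma i_in_Vij: "i \<in> Vij"
  using dag edge by (auto simp: Gij_vertices_def desc_def acyclic_def intro: trancl_into_trancl)

lemma W_ancestral: "(x, w) \<in> E\<^sup>* \<Longrightarrow> w \<in> W \<Longrightarrow> x \<in> W"
  unfolding W_def by (rule ancestors_rtrancl)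

lemma i_in_W: "i \<in> W"
  unfolding W_def by (rule subsetD[OF subset_ancestors]) simp

lemma A_subset_W: "A \<subseteq> W"
  unfolding W_def using subset_ancestors[of "insert i A \<union> {u. (u, j) \<in> E}" E] by auto

lemma parent_in_W: "(u, j) \<in> E \<Longrightarrow> u \<in> W"
  unfolding W_def by (rule subsetD[OF subset_ancestors]) simp

lemma W_subset: "W \<subseteq> Vij - {j}"
proof
  fix x assume "x \<in> W"
  then obtain t where t: "t \<in> insert i A \<union> {u. (u, j) \<in> E}" "(x, t) \<in> E\<^sup>*"
    unfolding W_def ancestors_def by blast
  have cycle: "(j, u) \<notin> E\<^sup>*" if "(u, j) \<in> E" for u
    using dag that by (auto simp: acyclic_def dest: rtrancl_into_trancl1)
  have "(j, t) \<notin> E\<^sup>*"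
    using t(1) cycle[OF edge] cycle A_sub j_notin Vij_minus_j by blast
  with t(2) have "(j, x) \<notin> E\<^sup>*" by (meson rtrancl_trans)
  then show "x \<in> Vij - {j}" by (rule Vij_minus_j[THEN iffD2])
qed

lemma edge_into_W: "(a, b) \<in> E \<Longrightarrow> b \<in> W \<Longrightarrow> (a, b) \<in> Eij"
  using W_ancestral[of a b] W_subset unfolding Gij_edges_def by auto

lemma rtrancl_into_W: "(x, t) \<in> E\<^sup>* \<Longrightarrow> t \<in> W \<Longrightarrow> (x, t) \<in> Eij\<^sup>*"
proof (induction rule: converse_rtrancl_induct)
  case (step x y)
  then have "(x, y) \<in> Eij" using W_ancestral edge_into_W by blast
  with step show ?case by (meson converse_rtrancl_into_rtrancl)
qed simp

lemma W_subset_ancestors: "W \<subseteq> ancestors Eij (insert i (insert j A))"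
proof
  fix x assume x: "x \<in> W"
  then obtain t where t: "t \<in> insert i A \<union> {u. (u, j) \<in> E}" "(x, t) \<in> E\<^sup>*"
    unfolding W_def ancestors_def by blast
  have "t \<in> W" using t unfolding W_def ancestors_def by blast
  with t(2) have xt: "(x, t) \<in> Eij\<^sup>*" by (rule rtrancl_into_W)
  show "x \<in> ancestors Eij (insert i (insert j A))"
  proof (cases "t \<in> insert i A")
    case False
    with t(1) have "(t, j) \<in> Eij" "t \<noteq> i"
      using \<open>t \<in> W\<close> W_subset j_in_Vij by (auto simp: Gij_edges_def)
    with xt have "(x, j) \<in> Eij\<^sup>*" by (meson rtrancl.rtrancl_into_rtrancl)
    then show ?thesis by (auto simp: ancestors_def)
  qed (use xt in \<open>auto simp: ancestors_def\<close>)
qed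

definition moral_adj :: "'n \<Rightarrow> 'n \<Rightarrow> bool" where
  "moral_adj a b \<longleftrightarrow> a \<noteq> b \<and> ((a, b) \<in> E \<or> (b, a) \<in> E \<or> (\<exists>w\<in>W. (a, w) \<in> E \<and> (b, w) \<in> E))"

inductive_set component :: "'n set" where
  component_base: "i \<in> component"
| component_step: "c \<in> component \<Longrightarrow> v \<in> W - A \<Longrightarrow> moral_adj c v \<Longrightarrow> v \<in> component"

lemma component_subset: "component \<subseteq> W - A"
proof
  fix v assume "v \<in> component"
  then show "v \<in> W - A" by induction (use i_in_W i_notin in auto)
qed

lemma component_walk:
  assumes "v \<in> component"
  shows "\<exists>p. walk Eij (v # p) \<and> set (v # p) \<subseteq> W \<and> last (v # p) = i \<and>
    successively3 (open_triple Eij A UNIV) (v # p)"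
  using assms
proof induction
  case component_base
  show ?case using i_in_W by (intro exI[of _ "[]"]) simp
next
  case (component_step c v)
  then obtain p where p: "walk Eij (c # p)" "set (c # p) \<subseteq> W" "last (c # p) = i"
    and t: "successively3 (open_triple Eij A UNIV) (c # p)" by blast
  have c: "c \<in> W - A" using component_step.hyps(1) component_subset by blast
  then have extend: "successively3 (open_triple Eij A UNIV) (x # c # p)" for x
    using t by (simp add: successively3_Cons_Cons open_triple_UNIV)
  have "(c, v) \<in> Eij \<or> (v, c) \<in> Eij \<or> (\<exists>w\<in>W. (c, w) \<in> Eij \<and> (v, w) \<in> Eij)"
    using component_step.hyps(2,3) c unfolding moral_adj_def by (auto intro: edge_into_W)
  then consider "adj Eij v c" | w where "w \<in> W" "(c, w) \<in> Eij" "(v, w) \<in> Eij"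
    unfolding adj_def by auto
  then show ?case
  proof cases
    case 1
    with p extend component_step.hyps(2) show ?thesis by (intro exI[of _ "c # p"]) auto
  next
    case (2 w)
    then have "head_to_head Eij v w c" by (simp add: head_to_head_def)
    then have "successively3 (open_triple Eij A UNIV) (v # w # c # p)"
      using extend by (simp add: open_triple_UNIV)
    with p 2 component_step.hyps(2) show ?thesis
      by (intro exI[of _ "w # c # p"]) (auto simp: adj_def)
  qed
qed

text \<open>This is where d-separation enters: a moral path from \<open>i\<close> to another parent \<open>u\<close> of \<open>j\<close>,
  followed by \<open>u \<rightarrow> j\<close>, is a walk whose colliders lie in \<open>An({i, j} \<union> A)\<close>.\<close>
lemma parent_in_component:
  assumes dsep: "d_separates Vij Eij A i j" and u: "u \<in> component" "(u, j) \<in> E"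
  shows "u = i"
proof (rule ccontr)
  assume "u \<noteq> i"
  obtain p where p: "walk Eij (u # p)" "set (u # p) \<subseteq> W" "last (u # p) = i"
    and t: "successively3 (open_triple Eij A UNIV) (u # p)"
    using component_walk[OF u(1)] by blast
  have uW: "u \<in> W - A" using u(1) component_subset by blast
  have "(u, j) \<in> Eij"
    using u(2) \<open>u \<noteq> i\<close> uW W_subset j_in_Vij by (auto simp: Gij_edges_def)
  then have w: "walk Eij (j # u # p)" using p(1) by (simp add: adj_def)
  have t_UNIV: "successively3 (open_triple Eij A UNIV) (j # u # p)"
    using t uW by (simp add: successively3_Cons_Cons open_triple_UNIV)
  have "j \<in> ancestors Eij (insert i (insert j A))"
    by (rule subsetD[OF subset_ancestors]) simp
  then have anc: "set (j # u # p) \<subseteq> ancestors Eij (insert i (insert j A))"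
    using p(2) W_subset_ancestors by auto
  have "successively3 (open_triple Eij A (insert i (insert j A))) (j # u # p)"
  proof (rule successively3_mono[OF t_UNIV])
    fix a b c assume "b \<in> set (j # u # p)" "open_triple Eij A UNIV a b c"
    with anc show "open_triple Eij A (insert i (insert j A)) a b c"
      by (auto simp: open_triple_def)
  qed
  with w have "successively3 (open_triple Eij A (insert i (insert j A))) (rev (j # u # p))"
    and "walk Eij (rev (j # u # p))"
    by (simp_all only: walk_rev successively3_rev open_triple_flip)
  moreover have "rev (j # u # p) \<noteq> []" "hd (rev (j # u # p)) = i" "last (rev (j # u # p)) = j"
    using p(3) by (simp_all add: hd_rev last_rev del: rev.simps)
  ultimately show False
    using d_separates_imp_no_open_walk[OF dsep acyclic_Eij Eij_subset i_in_Vij] by blast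
qed

end

section \<open>Linear algebra\<close>

lemma underdetermined_homogeneous_system:
  fixes K :: "'n::finite \<Rightarrow> 'n \<Rightarrow> real" and C R :: "'n set"
  assumes card_less: "card R < card C"
  shows "\<exists>\<alpha>. (\<forall>c. c \<notin> C \<longrightarrow> \<alpha> c = 0) \<and> (\<exists>c\<in>C. \<alpha> c \<noteq> 0) \<and>
            (\<forall>v\<in>R. (\<Sum>c\<in>C. \<alpha> c * K v c) = 0)"
proof -
  define U where "U = {x :: real^'n. \<forall>k. k \<notin> C \<longrightarrow> x $ k = 0}"
  define U' where "U' = {x :: real^'n. \<forall>k. k \<notin> R \<longrightarrow> x $ k = 0}"
  define M :: "real^'n^'n" where "M = (\<chi> v c. if v \<in> R \<and> c \<in> C then K v c else 0)"
  have M_apply: "(M *v x) $ v = (if v \<in> R then (\<Sum>c\<in>C. x $ c * K v c) else 0)" if "x \<in> U" for x v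
  proof -
    have "(M *v x) $ v = (\<Sum>c\<in>UNIV. if c \<in> C then (if v \<in> R then x $ c * K v c else 0) else 0)"
      using that by (auto simp: matrix_vector_mult_def M_def U_def intro!: sum.cong)
    then show ?thesis by (simp add: sum.If_cases)
  qed
  have subspace: "vec.subspace U" unfolding vec.subspace_def U_def by auto
  have "\<not> inj_on ((*v) M) U"
  proof
    assume "inj_on ((*v) M) U"
    then have "vec.dim ((*v) M ` U) = vec.dim U"
      using vec.dim_image_eq[OF matrix_vector_mul_linear_gen]
        vec.span_eq_iff[THEN iffD2, OF subspace] by metis
    moreover have "vec.dim ((*v) M ` U) \<le> vec.dim U'"
      using M_apply by (intro vec.dim_subset) (auto simp: U'_def)
    moreover have "vec.dim U = card C" "vec.dim U' = card R"
      unfolding U_def U'_def by (rule dim_substandard_cart)+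
    ultimately show False using card_less by simp
  qed
  then obtain x x' where x: "x \<in> U" "x' \<in> U" "x \<noteq> x'" "M *v x = M *v x'"
    by (auto simp: inj_on_def)
  then have d: "x - x' \<in> U" "M *v (x - x') = 0" "x - x' \<noteq> 0"
    by (auto simp: U_def matrix_vector_mult_diff_distrib)
  from d(3) obtain c where c: "(x - x') $ c \<noteq> 0"
    by (auto simp: Finite_Cartesian_Product.vec_eq_iff)
  show ?thesis
  proof (intro exI[of _ "\<lambda>c. (x - x') $ c"] conjI ballI allI impI)
    show "(x - x') $ c = 0" if "c \<notin> C" for c using d(1) that by (simp add: U_def)
    then show "\<exists>c\<in>C. (x - x') $ c \<noteq> 0" using c by blast
    show "(\<Sum>c\<in>C. (x - x') $ c * K v c) = 0" if "v \<in> R" for v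
      using M_apply[OF d(1), of v] d(2) that by simp
  qed
qed

lemma det_sub_eq_det: "det_sub M rs cs =
  Determinant.det (Matrix.mat (length rs) (length rs) (\<lambda>(a, b). M $ (rs ! a) $ (cs ! b)))"
  unfolding det_sub_def Determinant.det_def by (simp add: atLeast0LessThan)

lemma mult_mat_vec_index:
  "M \<in> carrier_mat n n \<Longrightarrow> a < n \<Longrightarrow>
    Matrix.vec_index (M *\<^sub>v Matrix.vec n z) a = (\<Sum>b<n. M $$ (a, b) * z b)"
  by (simp add: Matrix.scalar_prod_def atLeast0LessThan)

lemma det_eq_0_if_left_kernel:
  fixes D :: "real Matrix.mat"
  assumes D: "D \<in> carrier_mat n n"
    and kernel: "\<And>b. b < n \<Longrightarrow> (\<Sum>a<n. y a * D $$ (a, b)) = 0"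
    and nonzero: "a0 < n" "y a0 \<noteq> 0"
  shows "Determinant.det D = 0"
proof -
  have DT: "D\<^sup>T \<in> carrier_mat n n" using D by simp
  have "D\<^sup>T *\<^sub>v Matrix.vec n y = 0\<^sub>v n"
  proof (rule eq_vecI)
    fix b assume "b < dim_vec (0\<^sub>v n :: real Matrix.vec)"
    then have b: "b < n" by simp
    have "(\<Sum>a<n. D\<^sup>T $$ (b, a) * y a) = (\<Sum>a<n. y a * D $$ (a, b))"
      using D b by (intro sum.cong) auto
    with kernel[OF b] mult_mat_vec_index[OF DT b] b
    show "Matrix.vec_index (D\<^sup>T *\<^sub>v Matrix.vec n y) b = Matrix.vec_index (0\<^sub>v n) b" by simp
  qed (use D in simp)
  moreover have "Matrix.vec n y \<noteq> 0\<^sub>v n"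
    using nonzero by (metis index_vec index_zero_vec(1))
  ultimately have "Determinant.det D\<^sup>T = 0"
    using det_0_iff_vec_prod_zero[OF DT] vec_carrier by blast
  then show ?thesis using det_transpose[OF D] by simp
qed

lemma det_neq_0_if_injective:
  fixes M :: "real Matrix.mat"
  assumes M: "M \<in> carrier_mat n n"
    and inj: "\<And>z b. (\<And>a. a < n \<Longrightarrow> (\<Sum>b<n. M $$ (a, b) * z b) = 0) \<Longrightarrow> b < n \<Longrightarrow> z b = 0"
  shows "Determinant.det M \<noteq> 0"
proof
  assume "Determinant.det M = 0"
  then obtain v where v: "v \<in> carrier_vec n" "v \<noteq> 0\<^sub>v n" "M *\<^sub>v v = 0\<^sub>v n"
    using det_0_iff_vec_prod_zero[OF M] by blast
  define z where "z b = Matrix.vec_index v b" for b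
  have v_eq: "v = Matrix.vec n z"
    using v(1) by (auto simp: z_def)
  have "(\<Sum>b<n. M $$ (a, b) * z b) = 0" if "a < n" for a
    using mult_mat_vec_index[OF M that, of z] v(3) v_eq that by simp
  then have "z b = 0" if "b < n" for b using inj that by blast
  then have "v = 0\<^sub>v n" using v_eq by auto
  with v(2) show False ..
qed

lemma nth_permutation_exists:
  assumes xs: "distinct xs" and ys: "distinct ys" and set_eq: "set xs = set ys"
  obtains p where "p permutes {..<length xs}" "\<And>a. a < length xs \<Longrightarrow> xs ! p a = ys ! a"
proof -
  define n where "n = length xs"
  have len: "length ys = n"
    unfolding n_def using distinct_card[OF xs] distinct_card[OF ys] set_eq by simp
  define p where "p a = (if a < n then inv_into {..<n} ((!) xs) (ys ! a) else a)" for a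
  have img: "(!) xs ` {..<n} = set xs" by (auto simp: n_def in_set_conv_nth)
  have ys_in: "ys ! a \<in> (!) xs ` {..<n}" if "a < n" for a using that len set_eq img by auto
  have p_lt: "p a < n" and xs_p: "xs ! p a = ys ! a" if "a < n" for a
    using inv_into_into[OF ys_in[OF that]] f_inv_into_f[OF ys_in[OF that]] that
    by (simp_all add: p_def)
  have "inj_on p {..<n}"
  proof (rule inj_onI)
    fix a b assume "a \<in> {..<n}" "b \<in> {..<n}" "p a = p b"
    with xs_p have "ys ! a = ys ! b" by (metis lessThan_iff)
    with ys len \<open>a \<in> {..<n}\<close> \<open>b \<in> {..<n}\<close> show "a = b" by (simp add: nth_eq_iff_index_eq)
  qed
  then have "p permutes {..<n}"
    by (rule inj_on_nat_permutes) (use p_lt in \<open>auto simp: p_def\<close>)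
  with xs_p show ?thesis using that unfolding n_def by blast
qed

lemma det_linear_col0:
  fixes f g h :: "nat \<times> nat \<Rightarrow> real"
  assumes n: "0 < n"
    and same: "\<And>a b. a < n \<Longrightarrow> b < n \<Longrightarrow> 0 < b \<Longrightarrow> f (a, b) = h (a, b) \<and> g (a, b) = h (a, b)"
    and col0: "\<And>a. a < n \<Longrightarrow> h (a, 0) = f (a, 0) - t * g (a, 0)"
  shows "Determinant.det (Matrix.mat n n h) =
    Determinant.det (Matrix.mat n n f) - t * Determinant.det (Matrix.mat n n g)"
proof -
  have "mat_delete (Matrix.mat n n f) a 0 = mat_delete (Matrix.mat n n h) a 0"
    "mat_delete (Matrix.mat n n g) a 0 = mat_delete (Matrix.mat n n h) a 0" for a
    using same by (auto simp: mat_delete_def intro!: eq_matI)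
  then have cofactors: "cofactor (Matrix.mat n n f) a 0 = cofactor (Matrix.mat n n h) a 0"
    "cofactor (Matrix.mat n n g) a 0 = cofactor (Matrix.mat n n h) a 0" for a
    by (simp_all add: cofactor_def)
  have expand: "Determinant.det (Matrix.mat n n k) =
      (\<Sum>a<n. k (a, 0) * cofactor (Matrix.mat n n k) a 0)"
    for k :: "nat \<times> nat \<Rightarrow> real"
    using laplace_expansion_column[of "Matrix.mat n n k" n 0] n by simp
  have "(\<Sum>a<n. h (a, 0) * cofactor (Matrix.mat n n h) a 0) =
      (\<Sum>a<n. (f (a, 0) - t * g (a, 0)) * cofactor (Matrix.mat n n h) a 0)"
    using col0 by (intro sum.cong) auto
  then show ?thesis
    unfolding expand[of h] expand[of f] expand[of g] cofactors
    by (simp add: sum_distrib_left sum_subtractf left_diff_distrib right_diff_distrib mult_ac)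
qed

lemma det_sub_reorder:
  fixes M :: "real^'n^'n"
  assumes xs: "distinct xs" and ys: "distinct ys" and set_eq: "set xs = set ys"
  shows "det_sub M xs xs = det_sub M ys ys"
proof -
  define n where "n = length xs"
  obtain p where p: "p permutes {0..<n}" and xs_p: "\<And>a. a < n \<Longrightarrow> xs ! p a = ys ! a"
    using nth_permutation_exists[OF assms] unfolding n_def atLeast0LessThan by blast
  have len: "length ys = n"
    unfolding n_def using distinct_card[OF xs] distinct_card[OF ys] set_eq by simp
  define X where "X = Matrix.mat n n (\<lambda>(a, b). M $ (xs ! a) $ (xs ! b))"
  define Y where "Y = Matrix.mat n n (\<lambda>(a, b). M $ (ys ! a) $ (ys ! b))"
  define R where "R = Matrix.mat n n (\<lambda>(a, b). X $$ (p a, b))"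
  have X: "X \<in> carrier_mat n n" and R: "R \<in> carrier_mat n n" and Y: "Y \<in> carrier_mat n n"
    by (simp_all add: X_def R_def Y_def)
  have p_lt: "a < n \<Longrightarrow> p a < n" for a
    using permutes_in_image[OF p] by simp
  have "Y\<^sup>T = Matrix.mat n n (\<lambda>(a, b). R\<^sup>T $$ (p a, b))"
    by (rule eq_matI) (auto simp: X_def Y_def R_def p_lt xs_p)
  then have "Determinant.det Y = of_int (sign p) * Determinant.det R\<^sup>T"
    using det_permute_rows[OF _ p, of "R\<^sup>T"] det_transpose[OF Y] R by simp
  also have "\<dots> = of_int (sign p) * of_int (sign p) * Determinant.det X"
    using det_permute_rows[OF X p] det_transpose[OF R] by (simp add: R_def)
  also have "\<dots> = Determinant.det X"
    by (simp add: sign_def)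
  finally show ?thesis
    unfolding det_sub_eq_det X_def Y_def n_def len[unfolded n_def] by simp
qed

lemma sum_UNIV_eq_sum_nth:
  fixes f :: "'n::finite \<Rightarrow> real"
  assumes dI: "distinct I" and z: "\<And>u. u \<notin> set I \<Longrightarrow> f u = 0"
  shows "(\<Sum>u\<in>UNIV. f u) = (\<Sum>a<length I. f (I ! a))"
proof -
  have "(\<Sum>u\<in>UNIV. f u) = (\<Sum>u\<in>set I. f u)"
    by (rule sum.mono_neutral_right) (use z in auto)
  also have "\<dots> = (\<Sum>a<length I. f (I ! a))"
    by (rule sum.reindex_bij_betw[symmetric], rule bij_betw_nth[OF dI refl refl])
  finally show ?thesis .
qed

lemma sum_UNIV_scatter:
  fixes z :: "nat \<Rightarrow> real" and g :: "'n::finite \<Rightarrow> real"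
  shows "(\<Sum>u\<in>UNIV. (\<Sum>a<n. if I ! a = u then z a else 0) * g u) = (\<Sum>a<n. z a * g (I ! a))"
  unfolding sum_distrib_right by (subst sum.swap) (simp add: if_distrib if_distribR cong: if_cong)

lemma det_eq_0_if_left_kernel_on_list:
  fixes y :: "'n::finite \<Rightarrow> real" and col :: "nat \<Rightarrow> 'n \<Rightarrow> real"
  assumes I: "distinct I" and supp: "\<And>v. v \<notin> set I \<Longrightarrow> y v = 0" and nonzero: "y v0 \<noteq> 0"
    and kernel: "\<And>b. b < length I \<Longrightarrow> (\<Sum>v\<in>UNIV. y v * col b v) = 0"
  shows "Determinant.det (Matrix.mat (length I) (length I) (\<lambda>(a, b). col b (I ! a))) = 0"
proof -
  let ?n = "length I"
  obtain a0 where a0: "a0 < ?n" "I ! a0 = v0"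
    using supp nonzero by (metis in_set_conv_nth)
  show ?thesis
  proof (rule det_eq_0_if_left_kernel[of _ _ "\<lambda>a. y (I ! a)" a0])
    fix b assume b: "b < ?n"
    have "(\<Sum>a<?n. y (I ! a) * Matrix.mat ?n ?n (\<lambda>(a, b). col b (I ! a)) $$ (a, b)) =
        (\<Sum>a<?n. y (I ! a) * col b (I ! a))"
      using b by (intro sum.cong) auto
    also have "\<dots> = (\<Sum>v\<in>UNIV. y v * col b v)"
      by (rule sum_UNIV_eq_sum_nth[symmetric, OF I]) (use supp in auto)
    finally show "(\<Sum>a<?n. y (I ! a) * Matrix.mat ?n ?n (\<lambda>(a, b). col b (I ! a)) $$ (a, b)) = 0"
      using kernel[OF b] by simp
  qed (use a0 nonzero in simp_all)
qed

lemma det_sub_dependent_first_column: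
  fixes M :: "real^'n::finite^'n"
  assumes dist: "distinct (i # K)"
    and supp: "\<And>v. v \<notin> set (i # K) \<Longrightarrow> y v = 0" and nonzero: "y v0 \<noteq> 0"
    and y_K: "\<And>k. k \<in> set K \<Longrightarrow> (\<Sum>v\<in>UNIV. y v * M $ v $ k) = 0"
    and y_j: "(\<Sum>v\<in>UNIV. y v * M $ v $ j) = t * (\<Sum>v\<in>UNIV. y v * M $ v $ i)"
  shows "det_sub M (i # K) (j # K) = t * det_sub M (i # K) (i # K)"
proof -
  define I where "I = i # K"
  define n where "n = length I"
  define col where
    "col b v = (if b = 0 then M $ v $ j - t * M $ v $ i else M $ v $ (I ! b))" for b v
  have "Determinant.det (Matrix.mat n n (\<lambda>(a, b). col b (I ! a))) =
      Determinant.det (Matrix.mat n n (\<lambda>(a, b). M $ (I ! a) $ ((j # K) ! b))) -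
      t * Determinant.det (Matrix.mat n n (\<lambda>(a, b). M $ (I ! a) $ (I ! b)))"
    by (rule det_linear_col0) (auto simp: n_def I_def col_def nth_Cons')
  moreover have "Determinant.det (Matrix.mat n n (\<lambda>(a, b). col b (I ! a))) = 0"
    unfolding n_def
  proof (rule det_eq_0_if_left_kernel_on_list)
    fix b assume b: "b < length I"
    show "(\<Sum>v\<in>UNIV. y v * col b v) = 0"
    proof (cases b)
      case 0
      then show ?thesis
        using y_j by (simp add: col_def right_diff_distrib sum_subtractf sum_distrib_left mult_ac)
    next
      case (Suc b')
      with b have "I ! b \<in> set K" by (simp add: I_def)
      with Suc show ?thesis using y_K by (simp add: col_def)
    qed
  qed (use dist supp nonzero in \<open>simp_all add: I_def\<close>)
  ultimately show ?thesis
    unfolding det_sub_eq_det n_def I_def by simp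
qed

section \<open>Linear structural equation models\<close>

locale linear_sem =
  fixes E :: "('n::finite \<times> 'n) set" and \<omega> :: "'n \<Rightarrow> real" and \<Lambda> :: "real^'n^'n"
  assumes acyclic_E: "acyclic E" and \<omega>_pos: "\<And>v. 0 < \<omega> v"
    and \<Lambda>_support: "\<And>a b. (a, b) \<notin> E \<Longrightarrow> \<Lambda> $ a $ b = 0"
begin

definition L :: "real^'n^'n" where "L = mat 1 - \<Lambda>"

definition N :: "real^'n^'n" where "N = matrix_inv L"

definition S :: "real^'n^'n" where "S = phi \<omega> \<Lambda>"

lemma L_entry: "L $ a $ b = (if a = b then 1 else 0) - \<Lambda> $ a $ b"
  by (simp add: L_def Finite_Cartesian_Product.mat_def)

lemma L_nonzero_imp_edge: "L $ a $ b \<noteq> 0 \<Longrightarrow> a = b \<or> (a, b) \<in> E"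
  using \<Lambda>_support[of a b] by (cases "a = b") (auto simp: L_entry)

lemma wf_converse_E: "wf (E\<inverse>)"
  by (rule finite_acyclic_wf_converse[OF _ acyclic_E]) simp

lemma sum_L_mult: "(\<Sum>u\<in>UNIV. L $ w $ u * f u) = f w - (\<Sum>u\<in>UNIV. \<Lambda> $ w $ u * f u)"
  by (simp add: L_entry left_diff_distrib sum_subtractf of_bool_def[symmetric])

lemma sum_mult_L: "(\<Sum>u\<in>UNIV. f u * L $ u $ w) = f w - (\<Sum>u\<in>UNIV. f u * \<Lambda> $ u $ w)"
  by (simp add: L_entry right_diff_distrib sum_subtractf of_bool_def[symmetric])

text \<open>\<open>L\<close> is unitriangular with respect to any topological order of the DAG, which is
  what the well-founded induction along \<open>E\<inverse>\<close> exploits.\<close>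
lemma L_mult_vec_eq_0: "L *v x = 0 \<Longrightarrow> x = 0"
proof -
  assume Lx: "L *v x = 0"
  have x_eq: "x $ w = (\<Sum>u\<in>UNIV. \<Lambda> $ w $ u * x $ u)" for w
    using arg_cong[OF Lx, of "\<lambda>y. y $ w"] sum_L_mult[of w "\<lambda>u. x $ u"]
    by (simp add: matrix_vector_mult_def)
  have "x $ w = 0" for w
  proof (induction w rule: wf_induct[OF wf_converse_E])
    case (1 w)
    then have "\<Lambda> $ w $ u * x $ u = 0" for u
      using \<Lambda>_support[of w u] by (cases "(w, u) \<in> E") auto
    then have "(\<Sum>u\<in>UNIV. \<Lambda> $ w $ u * x $ u) = 0" by (intro sum.neutral) simp
    then show ?case using x_eq[of w] by simp
  qed
  then show "x = 0" by (simp add: Finite_Cartesian_Product.vec_eq_iff)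
qed

lemma L_mult_N: "L ** N = mat 1" and N_mult_L: "N ** L = mat 1"
proof -
  have "invertible L"
    using L_mult_vec_eq_0 matrix_left_invertible_ker invertible_left_inverse by blast
  then have "L ** N = mat 1 \<and> N ** L = mat 1"
    unfolding N_def matrix_inv_def invertible_def by (rule someI_ex)
  then show "L ** N = mat 1" "N ** L = mat 1" by auto
qed

lemma sum_L_N: "(\<Sum>w\<in>UNIV. L $ c $ w * N $ w $ u) = (if c = u then 1 else 0)"
  using arg_cong[OF L_mult_N, of "\<lambda>M. M $ c $ u"]
  by (simp add: matrix_matrix_mult_def Finite_Cartesian_Product.mat_def)

lemma sum_N_L: "(\<Sum>x\<in>UNIV. N $ w $ x * L $ x $ u) = (if w = u then 1 else 0)"
  using arg_cong[OF N_mult_L, of "\<lambda>M. M $ w $ u"]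
  by (simp add: matrix_matrix_mult_def Finite_Cartesian_Product.mat_def)

lemma N_eq_\<Lambda>_N: "N $ w $ u = (if w = u then 1 else 0) + (\<Sum>x\<in>UNIV. \<Lambda> $ w $ x * N $ x $ u)"
  using sum_L_N[of w u] sum_L_mult[of w "\<lambda>x. N $ x $ u"] by simp

lemma N_eq_N_\<Lambda>: "N $ w $ u = (if w = u then 1 else 0) + (\<Sum>x\<in>UNIV. N $ w $ x * \<Lambda> $ x $ u)"
  using sum_N_L[of w u] sum_mult_L[of "\<lambda>x. N $ w $ x" u] by simp

lemma N_nonzero_imp_rtrancl: "N $ w $ u \<noteq> 0 \<Longrightarrow> (w, u) \<in> E\<^sup>*"
proof (induction w rule: wf_induct[OF wf_converse_E])
  case (1 w)
  show ?case
  proof (rule ccontr)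
    assume not_reach: "(w, u) \<notin> E\<^sup>*"
    have "\<Lambda> $ w $ x * N $ x $ u = 0" for x
    proof (cases "(w, x) \<in> E")
      case True
      with not_reach have "(x, u) \<notin> E\<^sup>*" by (meson converse_rtrancl_into_rtrancl)
      with True 1 show ?thesis by auto
    qed (simp add: \<Lambda>_support)
    then have "(\<Sum>x\<in>UNIV. \<Lambda> $ w $ x * N $ x $ u) = 0" by (intro sum.neutral) simp
    with not_reach have "N $ w $ u = 0" using N_eq_\<Lambda>_N[of w u] by auto
    with "1.prems" show False by simp
  qed
qed

lemma S_entry: "S $ u $ v = (\<Sum>w\<in>UNIV. N $ w $ u * \<omega> w * N $ w $ v)"
proof -
  have "S $ u $ v = (\<Sum>k\<in>UNIV. (\<Sum>w\<in>UNIV. N $ w $ u * (if w = k then \<omega> w else 0)) * N $ k $ v)"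
    unfolding S_def phi_def N_def[symmetric] L_def[symmetric]
    by (simp add: matrix_matrix_mult_def Defs.diag_mat_def transpose_def)
  also have "\<dots> = (\<Sum>k\<in>UNIV. N $ k $ u * \<omega> k * N $ k $ v)"
    by (simp add: if_distrib cong: if_cong)
  finally show ?thesis .
qed

lemma sum_L_S: "(\<Sum>v\<in>UNIV. L $ v $ w * S $ v $ u) = \<omega> w * N $ w $ u"
proof -
  have "(\<Sum>v\<in>UNIV. L $ v $ w * S $ v $ u) =
      (\<Sum>v\<in>UNIV. \<Sum>x\<in>UNIV. N $ x $ v * L $ v $ w * (\<omega> x * N $ x $ u))"
    by (simp add: S_entry sum_distrib_left mult_ac)
  also have "\<dots> = (\<Sum>x\<in>UNIV. (\<Sum>v\<in>UNIV. N $ x $ v * L $ v $ w) * (\<omega> x * N $ x $ u))"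
    by (subst sum.swap) (simp add: sum_distrib_right)
  also have "\<dots> = \<omega> w * N $ w $ u"
    by (simp add: sum_N_L of_bool_def[symmetric])
  finally show ?thesis .
qed

lemma quadratic_form_S_eq_0:
  assumes "(\<Sum>u\<in>UNIV. \<Sum>v\<in>UNIV. x u * S $ u $ v * x v) = 0"
  shows "x c = 0"
proof -
  define z where "z w = (\<Sum>u\<in>UNIV. N $ w $ u * x u)" for w
  have "(\<Sum>u\<in>UNIV. \<Sum>v\<in>UNIV. x u * S $ u $ v * x v) =
      (\<Sum>u\<in>UNIV. \<Sum>v\<in>UNIV. \<Sum>w\<in>UNIV. \<omega> w * ((N $ w $ u * x u) * (N $ w $ v * x v)))"
    by (simp add: S_entry sum_distrib_left sum_distrib_right mult_ac)
  also have "\<dots> = (\<Sum>u\<in>UNIV. \<Sum>w\<in>UNIV. \<Sum>v\<in>UNIV. \<omega> w * ((N $ w $ u * x u) * (N $ w $ v * x v)))"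
    by (rule sum.cong[OF refl], rule sum.swap)
  also have "\<dots> = (\<Sum>w\<in>UNIV. \<Sum>u\<in>UNIV. \<Sum>v\<in>UNIV. \<omega> w * ((N $ w $ u * x u) * (N $ w $ v * x v)))"
    by (rule sum.swap)
  also have "\<dots> = (\<Sum>w\<in>UNIV. \<omega> w * (z w * z w))"
    unfolding z_def sum_product by (simp add: sum_distrib_left)
  finally have "(\<Sum>w\<in>UNIV. \<omega> w * (z w * z w)) = 0" using assms by simp
  moreover have "0 \<le> \<omega> w * (z w * z w)" for w using \<omega>_pos[of w] by simp
  ultimately have "\<omega> w * (z w * z w) = 0" for w by (simp add: sum_nonneg_eq_0_iff)
  then have z0: "z w = 0" for w using \<omega>_pos[of w] by (metis less_irrefl mult_eq_0_iff)
  have "x c = (\<Sum>u\<in>UNIV. (\<Sum>w\<in>UNIV. L $ c $ w * N $ w $ u) * x u)"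
    by (simp add: sum_L_N of_bool_def[symmetric])
  also have "\<dots> = (\<Sum>w\<in>UNIV. L $ c $ w * z w)"
    unfolding z_def by (simp add: sum_distrib_left sum_distrib_right mult.assoc, rule sum.swap)
  finally show "x c = 0" using z0 by simp
qed

lemma det_sub_S_neq_0:
  assumes dist: "distinct I"
  shows "det_sub S I I \<noteq> 0"
  unfolding det_sub_eq_det
proof (rule det_neq_0_if_injective)
  fix z :: "nat \<Rightarrow> real" and b
  let ?n = "length I"
  assume z: "\<And>a. a < ?n \<Longrightarrow>
    (\<Sum>c<?n. Matrix.mat ?n ?n (\<lambda>(a, b). S $ (I ! a) $ (I ! b)) $$ (a, c) * z c) = 0"
    and b: "b < ?n"
  define x where "x u = (\<Sum>a<?n. if I ! a = u then z a else 0)" for u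
  have "(\<Sum>u\<in>UNIV. \<Sum>v\<in>UNIV. x u * S $ u $ v * x v) = (\<Sum>u\<in>UNIV. x u * (\<Sum>v\<in>UNIV. x v * S $ u $ v))"
    by (simp add: sum_distrib_left mult_ac)
  also have "\<dots> = (\<Sum>a<?n. z a * (\<Sum>c<?n. z c * S $ (I ! a) $ (I ! c)))"
    unfolding x_def sum_UNIV_scatter ..
  also have "\<dots> = 0"
    using z by (simp add: mult_ac)
  finally have "x (I ! b) = 0" by (rule quadratic_form_S_eq_0)
  moreover have "x (I ! b) = z b"
    using b dist by (simp add: x_def nth_eq_iff_index_eq cong: if_cong)
  ultimately show "z b = 0" by simp
qed simp

end

locale sem_edge = dag_edge E i j A + linear_sem E \<omega> \<Lambda>
  for E :: "('n::{finite,linorder} \<times> 'n) set" and i j A \<omega> \<Lambda>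
begin

definition weight :: "('n \<Rightarrow> real) \<Rightarrow> 'n \<Rightarrow> real" where
  "weight \<alpha> w = (if w \<in> W then (\<Sum>c\<in>UNIV. L $ c $ w * \<alpha> c) / \<omega> w else 0)"

text \<open>\<open>ann \<alpha> = L D L\<^sup>T \<alpha>\<close> with \<open>D = diag(\<omega>)\<inverse>\<close> restricted to \<open>W\<close>; its entries are
  \<open>ann \<alpha> v = (\<Sum>c. \<alpha> c * K v c)\<close>, and \<open>ann_S \<alpha>\<close> is the row vector \<open>(ann \<alpha>)\<^sup>T \<Sigma>\<close>.\<close>
definition ann :: "('n \<Rightarrow> real) \<Rightarrow> 'n \<Rightarrow> real" where
  "ann \<alpha> v = (\<Sum>w\<in>UNIV. L $ v $ w * weight \<alpha> w)"

definition ann_S :: "('n \<Rightarrow> real) \<Rightarrow> 'n \<Rightarrow> real" where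
  "ann_S \<alpha> u = (\<Sum>w\<in>UNIV. weight \<alpha> w * (\<omega> w * N $ w $ u))"

definition K :: "'n \<Rightarrow> 'n \<Rightarrow> real" where
  "K v c = (\<Sum>w\<in>W. L $ v $ w * L $ c $ w / \<omega> w)"

lemma sum_ann_mult_S: "(\<Sum>v\<in>UNIV. ann \<alpha> v * S $ v $ u) = ann_S \<alpha> u"
proof -
  have "(\<Sum>v\<in>UNIV. ann \<alpha> v * S $ v $ u) = (\<Sum>v\<in>UNIV. \<Sum>w\<in>UNIV. weight \<alpha> w * (L $ v $ w * S $ v $ u))"
    unfolding ann_def by (simp add: sum_distrib_left sum_distrib_right mult_ac)
  also have "\<dots> = (\<Sum>w\<in>UNIV. weight \<alpha> w * (\<Sum>v\<in>UNIV. L $ v $ w * S $ v $ u))"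
    by (subst sum.swap) (simp add: sum_distrib_left)
  finally show ?thesis unfolding ann_S_def by (simp add: sum_L_S)
qed

text \<open>On the ancestral set \<open>W\<close> the weights undo \<open>\<Omega>\<close> and \<open>(I - \<Lambda>)\<^sup>T\<close>, so
  \<open>ann\<^sup>T \<Sigma>\<close> reproduces \<open>\<alpha>\<close>.\<close>
lemma ann_S_on_W:
  assumes "u \<in> W" shows "ann_S \<alpha> u = \<alpha> u"
proof -
  have pointwise: "weight \<alpha> w * (\<omega> w * N $ w $ u) = (\<Sum>c\<in>UNIV. L $ c $ w * \<alpha> c) * N $ w $ u" for w
  proof (cases "w \<in> W")
    case False
    have "N $ w $ u = 0"
      using W_ancestral[of w u] assms False N_nonzero_imp_rtrancl by blast
    then show ?thesis by simp
  qed (use \<omega>_pos[of w] in \<open>simp add: weight_def\<close>)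
  have "ann_S \<alpha> u = (\<Sum>w\<in>UNIV. (\<Sum>c\<in>UNIV. L $ c $ w * \<alpha> c) * N $ w $ u)"
    unfolding ann_S_def by (rule sum.cong[OF refl pointwise])
  also have "\<dots> = (\<Sum>c\<in>UNIV. \<alpha> c * (\<Sum>w\<in>UNIV. L $ c $ w * N $ w $ u))"
    by (simp add: sum_distrib_left sum_distrib_right mult_ac, rule sum.swap)
  also have "\<dots> = \<alpha> u"
    by (simp add: sum_L_N of_bool_def[symmetric])
  finally show ?thesis .
qed

lemma ann_S_at_j:
  assumes dsep: "d_separates Vij Eij A i j" and supp: "\<And>c. c \<notin> component \<Longrightarrow> \<alpha> c = 0"
  shows "ann_S \<alpha> j = \<Lambda> $ i $ j * \<alpha> i"
proof -
  have "weight \<alpha> w * (\<omega> w * N $ w $ j) =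
      weight \<alpha> w * (\<omega> w * (\<Sum>x\<in>UNIV. N $ w $ x * \<Lambda> $ x $ j))" for w
    using W_subset N_eq_N_\<Lambda>[of w j] by (cases "w \<in> W") (auto simp: weight_def)
  then have "ann_S \<alpha> j = (\<Sum>w\<in>UNIV. \<Sum>x\<in>UNIV. \<Lambda> $ x $ j * (weight \<alpha> w * (\<omega> w * N $ w $ x)))"
    unfolding ann_S_def by (simp add: sum_distrib_left mult_ac)
  also have "\<dots> = (\<Sum>x\<in>UNIV. \<Lambda> $ x $ j * ann_S \<alpha> x)"
    unfolding ann_S_def by (subst sum.swap) (simp add: sum_distrib_left)
  also have "\<dots> = (\<Sum>x\<in>UNIV. if x = i then \<Lambda> $ i $ j * \<alpha> i else 0)"
  proof (rule sum.cong[OF refl])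
    fix x
    show "\<Lambda> $ x $ j * ann_S \<alpha> x = (if x = i then \<Lambda> $ i $ j * \<alpha> i else 0)"
    proof (cases "(x, j) \<in> E")
      case True
      then have "ann_S \<alpha> x = \<alpha> x" using parent_in_W ann_S_on_W by blast
      moreover have "x \<noteq> i \<Longrightarrow> \<alpha> x = 0"
        using True supp parent_in_component[OF dsep] by blast
      ultimately show ?thesis by auto
    qed (use \<Lambda>_support edge in auto)
  qed
  finally show ?thesis by simp
qed

lemma ann_outside_W:
  assumes "v \<notin> W" shows "ann \<alpha> v = 0"
proof -
  have "L $ v $ w * weight \<alpha> w = 0" for w
  proof (cases "w \<in> W")
    case True
    with assms have "L $ v $ w = 0"
      using L_nonzero_imp_edge W_ancestral[of v w] by auto
    then show ?thesis by simp
  qed (simp add: weight_def)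
  then show ?thesis unfolding ann_def by (simp add: sum.neutral)
qed

lemma ann_on_W:
  assumes supp: "\<And>c. c \<notin> component \<Longrightarrow> \<alpha> c = 0"
  shows "ann \<alpha> v = (\<Sum>c\<in>component. \<alpha> c * K v c)"
proof -
  have "ann \<alpha> v = (\<Sum>w\<in>W. L $ v $ w * ((\<Sum>c\<in>component. L $ c $ w * \<alpha> c) / \<omega> w))"
    unfolding ann_def weight_def using supp
    by (simp add: sum.If_cases if_distrib sum.mono_neutral_cong_right[of UNIV component])
  also have "\<dots> = (\<Sum>c\<in>component. \<alpha> c * K v c)"
    unfolding K_def by (simp add: sum_distrib_left sum_divide_distrib mult_ac, rule sum.swap)
  finally show ?thesis .
qed

lemma K_outside_component:
  assumes v: "v \<in> W - A" "v \<notin> component" and c: "c \<in> component"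
  shows "K v c = 0"
proof -
  have "L $ v $ w * L $ c $ w = 0" if "w \<in> W" for w
  proof (rule ccontr)
    assume "L $ v $ w * L $ c $ w \<noteq> 0"
    then have "v = w \<or> (v, w) \<in> E" "c = w \<or> (c, w) \<in> E"
      using L_nonzero_imp_edge by auto
    moreover have "v \<noteq> c" using v(2) c by auto
    ultimately have "moral_adj c v" using that by (auto simp: moral_adj_def)
    with c v(1) have "v \<in> component" by (rule component_step)
    with v(2) show False by simp
  qed
  then show ?thesis unfolding K_def by (simp add: sum.neutral)
qed

lemma exists_annihilating_vector:
  assumes dsep: "d_separates Vij Eij A i j"
  shows "\<exists>y. (\<forall>v. v \<notin> insert i A \<longrightarrow> y v = 0) \<and> (\<exists>v. y v \<noteq> 0) \<and>
    (\<forall>a\<in>A. (\<Sum>v\<in>UNIV. y v * S $ v $ a) = 0) \<and>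
    (\<Sum>v\<in>UNIV. y v * S $ v $ j) = \<Lambda> $ i $ j * (\<Sum>v\<in>UNIV. y v * S $ v $ i)"
proof -
  have "card (component - {i}) < card component"
    using component_base by (intro card_Diff1_less) simp_all
  then obtain \<alpha> where supp: "\<And>c. c \<notin> component \<Longrightarrow> \<alpha> c = 0"
    and nonzero: "\<exists>c\<in>component. \<alpha> c \<noteq> 0"
    and eqs: "\<And>v. v \<in> component - {i} \<Longrightarrow> (\<Sum>c\<in>component. \<alpha> c * K v c) = 0"
    using underdetermined_homogeneous_system[of "component - {i}" component K] by blast
  have ann_supp: "ann \<alpha> v = 0" if "v \<notin> insert i A" for v
  proof (cases "v \<in> W")
    case True
    with that have "(\<Sum>c\<in>component. \<alpha> c * K v c) = 0"
      using eqs K_outside_component[of v] by (cases "v \<in> component") (auto intro: sum.neutral)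
    then show ?thesis using ann_on_W[OF supp] by simp
  qed (rule ann_outside_W)
  have ann_S_component: "ann_S \<alpha> c = \<alpha> c" if "c \<in> component" for c
    using that component_subset ann_S_on_W[of c \<alpha>] by auto
  have "\<exists>v. ann \<alpha> v \<noteq> 0"
  proof (rule ccontr)
    assume "\<nexists>v. ann \<alpha> v \<noteq> 0"
    then have "ann_S \<alpha> c = 0" for c using sum_ann_mult_S[of \<alpha> c] by simp
    with nonzero ann_S_component show False by auto
  qed
  moreover have "(\<Sum>v\<in>UNIV. ann \<alpha> v * S $ v $ a) = 0" if "a \<in> A" for a
  proof -
    have "a \<in> W" "a \<notin> component" using that A_subset_W component_subset by auto
    then show ?thesis using sum_ann_mult_S ann_S_on_W supp by simp
  qed
  moreover have "(\<Sum>v\<in>UNIV. ann \<alpha> v * S $ v $ j) = \<Lambda> $ i $ j * (\<Sum>v\<in>UNIV. ann \<alpha> v * S $ v $ i)"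
    using ann_S_at_j[OF dsep supp] ann_S_on_W[OF i_in_W] sum_ann_mult_S by simp
  ultimately show ?thesis using ann_supp by (intro exI[of _ "ann \<alpha>"]) auto
qed

lemma lambda_cond_eq_edge_weight:
  assumes dsep: "d_separates Vij Eij A i j"
  shows "lambda_cond S i j (A \<union> {i}) = \<Lambda> $ i $ j"
proof -
  define K where "K = sorted_list_of_set A"
  have dist: "distinct (i # K)" and set_K: "set K = A"
    using i_notin by (simp_all add: K_def)
  have "set (sorted_list_of_set (A \<union> {i})) = set (i # K)"
    using set_K by (simp only: set_sorted_list_of_set[OF finite]) auto
  then have "det_sub S (sorted_list_of_set (A \<union> {i})) (sorted_list_of_set (A \<union> {i})) =
      det_sub S (i # K) (i # K)"
    by (rule det_sub_reorder[OF distinct_sorted_list_of_set dist])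
  moreover have "(A \<union> {i}) - {i} = A" using i_notin by auto
  ultimately have "lambda_cond S i j (A \<union> {i}) =
      det_sub S (i # K) (j # K) / det_sub S (i # K) (i # K)"
    by (simp add: lambda_cond_def K_def)
  moreover obtain y v0 where "\<forall>v. v \<notin> insert i A \<longrightarrow> y v = 0" "y v0 \<noteq> 0"
    "\<forall>a\<in>A. (\<Sum>v\<in>UNIV. y v * S $ v $ a) = 0"
    "(\<Sum>v\<in>UNIV. y v * S $ v $ j) = \<Lambda> $ i $ j * (\<Sum>v\<in>UNIV. y v * S $ v $ i)"
    using exists_annihilating_vector[OF dsep] by blast
  then have "det_sub S (i # K) (j # K) = \<Lambda> $ i $ j * det_sub S (i # K) (i # K)"
    using set_K by (intro det_sub_dependent_first_column[OF dist]) auto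
  ultimately show ?thesis using det_sub_S_neq_0[OF dist] by simp
qed

end

theorem mainTheorem3:
  fixes E :: "('n::{finite,linorder} \<times> 'n) set"
    and i j :: 'n and A :: "'n set"
  assumes dag: "acyclic E"
    and edge: "(i, j) \<in> E"
    and A_sub: "A \<subseteq> Gij_vertices E j"
    and i_notin: "i \<notin> A" and j_notin: "j \<notin> A"
    and dsep: "d_separates (Gij_vertices E j) (Gij_edges E i j) A i j"
  shows "\<forall>(\<omega> :: 'n \<Rightarrow> real) (\<Lambda> :: ((real, 'n) vec, 'n) vec).
           (\<forall>v. \<omega> v > 0) \<longrightarrow> (\<forall>a b. (a, b) \<notin> E \<longrightarrow> \<Lambda> $ a $ b = 0) \<longrightarrow>
           lambda_cond (phi \<omega> \<Lambda>) i j (A \<union> {i}) = \<Lambda> $ i $ j"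
proof (intro allI impI)
  fix \<omega> :: "'n \<Rightarrow> real" and \<Lambda> :: "((real, 'n) vec, 'n) vec"
  assume "\<forall>v. \<omega> v > 0" and "\<forall>a b. (a, b) \<notin> E \<longrightarrow> \<Lambda> $ a $ b = 0"
  then interpret sem_edge E i j A \<omega> \<Lambda>
    using assms by unfold_locales auto
  show "lambda_cond (phi \<omega> \<Lambda>) i j (A \<union> {i}) = \<Lambda> $ i $ j"
    using lambda_cond_eq_edge_weight[OF dsep] by (simp add: S_def)
qed

end
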